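(* If there exists a $(G,[k_1,\dots,k_t],\lambda)$ Hadamard partitioned difference family and $G$ has a subgroup of index $2$, then the Diophantine system $$x_1+\cdots+x_t=\lambda,\qquad 2x_1(k_1-x_1)+\cdots+2x_t(k_t-x_t)=\lambda^2$$ has an integer solution $(s_1,\dots,s_t)$ with $0\le s_i\le k_i$ for each $i$.
   Context: $G$ is a finite group written additively, with difference $x-y:=x+(-y)$. For $B\subseteq G$, $\Delta B$ is the multiset $\{x-y: x,y\in B, x\neq y\}$; for $\mathcal{F}=\{B_1,\dots,B_t\}$, $\Delta\mathcal{F}$ is the multiset union of the $\Delta B_i$. $\mathcal{F}$ is a $(G,[k_1,\dots,k_t],\lambda)$ partitioned difference family if the $B_i$ partition $G$, $|B_i|=k_i$, and $\Delta\mathcal{F}$ contains every non-zero element of $G$ exactly $\lambda$ times; it is Hadamard if $|G|=2\lambda$. *)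

theory Defs
  imports Main "HOL-Library.Multiset"
begin

text \<open>Finite group G = the (finite) type 'a of class group_add, written additively.\<close>

definition is_subgroup :: "'a::group_add set \<Rightarrow> bool" where
  "is_subgroup H \<longleftrightarrow> 0 \<in> H \<and> (\<forall>x\<in>H. \<forall>y\<in>H. x + y \<in> H) \<and> (\<forall>x\<in>H. - x \<in> H)"

definition has_index2_subgroup :: "'a::{group_add,finite} itself \<Rightarrow> bool" where
  "has_index2_subgroup _ \<longleftrightarrow> (\<exists>H::'a set. is_subgroup H \<and> card (UNIV :: 'a set) = 2 * card H)"

definition delta :: "'a::group_add set \<Rightarrow> 'a multiset" where
  "delta B = image_mset (\<lambda>(x, y). x - y) (mset_set {(x, y). x \<in> B \<and> y \<in> B \<and> x \<noteq> y})"

definition delta_family :: "'a::group_add set list \<Rightarrow> 'a multiset" where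
  "delta_family Bs = sum_list (map delta Bs)"

text \<open>(G,[k_1,...,k_t],lambda) partitioned difference family, blocks indexed 0..t-1.\<close>
definition is_PDF :: "'a::{group_add,finite} set list \<Rightarrow> nat list \<Rightarrow> nat \<Rightarrow> bool" where
  "is_PDF Bs ks lam \<longleftrightarrow>
     length Bs = length ks \<and>
     (\<forall>i<length Bs. \<forall>j<length Bs. i \<noteq> j \<longrightarrow> Bs ! i \<inter> Bs ! j = {}) \<and>
     (\<Union>i<length Bs. Bs ! i) = UNIV \<and>
     (\<forall>i<length Bs. card (Bs ! i) = ks ! i) \<and>
     (\<forall>g. g \<noteq> 0 \<longrightarrow> count (delta_family Bs) g = lam)"

definition is_Hadamard_PDF :: "'a::{group_add,finite} set list \<Rightarrow> nat list \<Rightarrow> nat \<Rightarrow> bool" where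
  "is_Hadamard_PDF Bs ks lam \<longleftrightarrow> is_PDF Bs ks lam \<and> card (UNIV :: 'a set) = 2 * lam"

end

theory Submission
  imports Defs
begin

text \<open>Take an index-2 subgroup \<open>H\<close> and put \<open>s\<^sub>i = |B\<^sub>i \<inter> H|\<close>. Since the blocks partition
  \<open>G\<close>, the \<open>s\<^sub>i\<close> add up to \<open>|H| = \<lambda>\<close>. Now count the differences lying outside \<open>H\<close>: each
  of the \<open>|G - H| = \<lambda>\<close> elements of \<open>G - H\<close> is hit \<open>\<lambda>\<close> times, giving \<open>\<lambda>\<^sup>2\<close>; on the other hand,
  as \<open>G - H\<close> is the only non-trivial coset, \<open>x - y \<notin> H\<close> exactly when one of \<open>x, y\<close> lies in
  \<open>H\<close> and the other does not, so block \<open>B\<^sub>i\<close> contributes \<open>2 s\<^sub>i (k\<^sub>i - s\<^sub>i)\<close> of them.\<close>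

lemma size_filter_mset_eq_sum_count:
  fixes M :: "'a::finite multiset"
  shows "size (filter_mset P M) = (\<Sum>x | P x. count M x)"
proof (induction M)
  case empty
  then show ?case by simp
next
  case (add a M)
  have "(\<Sum>x | P x. count (add_mset a M) x) = (\<Sum>x | P x. count M x + (if x = a then 1 else 0))"
    by (intro sum.cong) auto
  also have "\<dots> = (\<Sum>x | P x. count M x) + (if P a then 1 else 0)"
    by (simp add: sum.distrib)
  finally show ?case using add by simp
qed

lemma size_filter_delta:
  assumes "finite B"
  shows "size (filter_mset P (delta B)) = card {(x, y). x \<in> B \<and> y \<in> B \<and> x \<noteq> y \<and> P (x - y)}"
proof -
  have "finite {(x, y). x \<in> B \<and> y \<in> B \<and> x \<noteq> y}"
    by (rule finite_subset[of _ "B \<times> B"]) (use assms in auto)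
  moreover have "{p \<in> {(x, y). x \<in> B \<and> y \<in> B \<and> x \<noteq> y}. P (case p of (x, y) \<Rightarrow> x - y)}
      = {(x, y). x \<in> B \<and> y \<in> B \<and> x \<noteq> y \<and> P (x - y)}"
    by auto
  ultimately show ?thesis
    unfolding delta_def filter_mset_image_mset by simp
qed

lemma size_filter_delta_family:
  "size (filter_mset P (delta_family Bs)) = (\<Sum>i<length Bs. size (filter_mset P (delta (Bs ! i))))"
proof -
  have "size (filter_mset P (delta_family Bs)) = (\<Sum>B\<leftarrow>Bs. size (filter_mset P (delta B)))"
    unfolding delta_family_def by (induction Bs) auto
  then show ?thesis
    by (simp add: sum_list_sum_nth lessThan_atLeast0)
qed

lemma subgroup_add:
  "is_subgroup H \<Longrightarrow> x \<in> H \<Longrightarrow> y \<in> H \<Longrightarrow> x + y \<in> H"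
  unfolding is_subgroup_def by blast

lemma subgroup_uminus:
  "is_subgroup H \<Longrightarrow> x \<in> H \<Longrightarrow> - x \<in> H"
  unfolding is_subgroup_def by blast

lemma subgroup_diff:
  "is_subgroup H \<Longrightarrow> x \<in> H \<Longrightarrow> y \<in> H \<Longrightarrow> x - y \<in> H"
  unfolding diff_conv_add_uminus by (intro subgroup_add subgroup_uminus)

lemma subgroup_diff_mem_iff_left:
  assumes "is_subgroup H" "x \<in> H"
  shows "x - y \<in> H \<longleftrightarrow> y \<in> H"
proof
  assume "x - y \<in> H"
  then have "- (- x + (x - y)) \<in> H"
    using assms by (intro subgroup_uminus subgroup_add)
  moreover have "- (- x + (x - y)) = y"
    unfolding diff_conv_add_uminus minus_add_cancel by simp
  ultimately show "y \<in> H" by simp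
qed (use assms subgroup_diff in blast)

lemma subgroup_diff_mem_iff_right:
  assumes "is_subgroup H" "y \<in> H"
  shows "x - y \<in> H \<longleftrightarrow> x \<in> H"
proof
  assume "x - y \<in> H"
  then have "(x - y) + y \<in> H"
    using assms by (intro subgroup_add)
  then show "x \<in> H" by simp
qed (use assms subgroup_diff in blast)

lemma index2_subgroup_diff_mem:
  fixes H :: "'a::{group_add,finite} set"
  assumes H: "is_subgroup H" "card (UNIV :: 'a set) = 2 * card H"
    and "x \<notin> H" "y \<notin> H"
  shows "x - y \<in> H"
proof -
  let ?Hy = "(\<lambda>h. h + y) ` H"
  have "?Hy \<inter> H = {}"
    using subgroup_diff_mem_iff_left[OF H(1)] \<open>y \<notin> H\<close> by fastforce
  then have "card (?Hy \<union> H) = card ?Hy + card H"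
    by (simp add: card_Un_disjoint)
  also have "\<dots> = card (UNIV :: 'a set)"
    using H(2) by (simp add: card_image inj_on_def)
  finally have "?Hy \<union> H = UNIV"
    by (simp add: card_subset_eq)
  then obtain h where "h \<in> H" "x = h + y"
    using \<open>x \<notin> H\<close> by blast
  then show ?thesis by simp
qed

lemma index2_subgroup_diff_notin_iff:
  fixes H :: "'a::{group_add,finite} set"
  assumes "is_subgroup H" "card (UNIV :: 'a set) = 2 * card H"
  shows "x - y \<notin> H \<longleftrightarrow> (x \<in> H \<longleftrightarrow> y \<notin> H)"
  using subgroup_diff_mem_iff_left[OF assms(1)] subgroup_diff_mem_iff_right[OF assms(1)]
    index2_subgroup_diff_mem[OF assms]
  by blast

lemma card_diff_pairs_notin_index2_subgroup:
  fixes H B :: "'a::{group_add,finite} set"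
  assumes "is_subgroup H" "card (UNIV :: 'a set) = 2 * card H"
  shows "card {(x, y). x \<in> B \<and> y \<in> B \<and> x \<noteq> y \<and> x - y \<notin> H}
       = 2 * card (B \<inter> H) * (card B - card (B \<inter> H))"
proof -
  have "{(x, y). x \<in> B \<and> y \<in> B \<and> x \<noteq> y \<and> x - y \<notin> H}
      = (B \<inter> H) \<times> (B - H) \<union> (B - H) \<times> (B \<inter> H)"
    using index2_subgroup_diff_notin_iff[OF assms] by blast
  moreover have "card ((B \<inter> H) \<times> (B - H) \<union> (B - H) \<times> (B \<inter> H))
      = card (B \<inter> H) * card (B - H) + card (B - H) * card (B \<inter> H)"
    by (subst card_Un_disjoint) (auto simp: card_cartesian_product)
  moreover have "card (B - H) = card B - card (B \<inter> H)"
    by (simp add: card_Diff_subset_Int)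
  ultimately show ?thesis by simp
qed

lemma PDF_sum_card_Int:
  fixes H :: "'a::{group_add,finite} set"
  assumes "is_PDF Bs ks lam"
  shows "(\<Sum>i<length Bs. card (Bs ! i \<inter> H)) = card H"
proof -
  have "\<forall>i<length Bs. \<forall>j<length Bs. i \<noteq> j \<longrightarrow> Bs ! i \<inter> Bs ! j = {}"
    using assms unfolding is_PDF_def by blast
  then have "(\<Sum>i<length Bs. card (Bs ! i \<inter> H)) = card (\<Union>i<length Bs. Bs ! i \<inter> H)"
    by (intro card_UN_disjoint[symmetric]) auto
  also have "(\<Union>i<length Bs. Bs ! i \<inter> H) = H"
    using assms unfolding is_PDF_def by blast
  finally show ?thesis .
qed

lemma PDF_size_filter_delta_family:
  fixes A :: "'a::{group_add,finite} set"
  assumes "is_PDF Bs ks lam" "0 \<notin> A"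
  shows "size (filter_mset (\<lambda>g. g \<in> A) (delta_family Bs)) = card A * lam"
proof -
  have "size (filter_mset (\<lambda>g. g \<in> A) (delta_family Bs)) = (\<Sum>g\<in>A. count (delta_family Bs) g)"
    using size_filter_mset_eq_sum_count[of "\<lambda>g. g \<in> A"] by simp
  also have "\<dots> = (\<Sum>g\<in>A. lam)"
  proof (rule sum.cong)
    show "count (delta_family Bs) g = lam" if "g \<in> A" for g
      using assms that unfolding is_PDF_def by metis
  qed simp
  finally show ?thesis by simp
qed

lemma PDF_sum_cross_pairs_index2_subgroup:
  fixes H :: "'a::{group_add,finite} set"
  assumes PDF: "is_PDF Bs ks lam" and H: "is_subgroup H" "card (UNIV :: 'a set) = 2 * card H"
  shows "(\<Sum>i<length Bs. 2 * card (Bs ! i \<inter> H) * (card (Bs ! i) - card (Bs ! i \<inter> H)))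
       = card H * lam"
proof -
  have "card (- H) = card H"
    using H(2) by (simp add: Compl_eq_Diff_UNIV card_Diff_subset)
  moreover have "0 \<notin> - H"
    using H(1) unfolding is_subgroup_def by simp
  ultimately have "size (filter_mset (\<lambda>g. g \<notin> H) (delta_family Bs)) = card H * lam"
    using PDF_size_filter_delta_family[OF PDF, of "- H"] by simp
  then show ?thesis
    by (simp add: size_filter_delta_family size_filter_delta card_diff_pairs_notin_index2_subgroup[OF H])
qed

theorem corollary5p2:
  fixes Bs :: "'a::{group_add,finite} set list" and ks :: "nat list" and lam :: nat
  assumes "is_Hadamard_PDF Bs ks lam"
    and "has_index2_subgroup TYPE('a)"
  shows "\<exists>s :: nat \<Rightarrow> int.
           (\<forall>i<length ks. 0 \<le> s i \<and> s i \<le> int (ks ! i)) \<and>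
           (\<Sum>i<length ks. s i) = int lam \<and>
           (\<Sum>i<length ks. 2 * s i * (int (ks ! i) - s i)) = (int lam)^2"
proof -
  obtain H :: "'a set" where H: "is_subgroup H" "card (UNIV :: 'a set) = 2 * card H"
    using assms(2) unfolding has_index2_subgroup_def by blast
  have PDF: "is_PDF Bs ks lam" and "card H = lam"
    using assms(1) H(2) unfolding is_Hadamard_PDF_def by auto
  have len: "length Bs = length ks" and ks: "\<And>i. i < length ks \<Longrightarrow> ks ! i = card (Bs ! i)"
    using PDF unfolding is_PDF_def by auto
  define s where "s i = int (card (Bs ! i \<inter> H))" for i
  have le: "card (Bs ! i \<inter> H) \<le> card (Bs ! i)" for i
    by (simp add: card_mono)
  have "\<forall>i<length ks. 0 \<le> s i \<and> s i \<le> int (ks ! i)"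
    using le ks by (simp add: s_def)
  moreover have "(\<Sum>i<length ks. s i) = int lam"
    using PDF_sum_card_Int[OF PDF, of H] \<open>card H = lam\<close> len by (simp add: s_def flip: of_nat_sum)
  moreover have "(\<Sum>i<length ks. 2 * s i * (int (ks ! i) - s i))
      = int (\<Sum>i<length Bs. 2 * card (Bs ! i \<inter> H) * (card (Bs ! i) - card (Bs ! i \<inter> H)))"
    unfolding of_nat_sum len using le ks by (intro sum.cong) (simp_all add: s_def of_nat_diff)
  ultimately show ?thesis
    using PDF_sum_cross_pairs_index2_subgroup[OF PDF H] \<open>card H = lam\<close> by (auto simp: power2_eq_square)
qed

end
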